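(* Let $R=\mathbb{Z}[a]$ and $\Gamma$ be as below. For left $\Gamma$-modules $M,N$, the $R$-module $M\otimes_R N$ carries a well-defined left $\Gamma$-module structure extending its $R$-module structure, determined by \begin{align*} Q_0(x\otimes y) &= Q_0x\otimes Q_0y + 2\,Q_1x\otimes Q_2y+2\,Q_2x\otimes Q_1y,\\ Q_1(x\otimes y) &= Q_0x\otimes Q_1y + Q_1x\otimes Q_0y + a\,Q_1x\otimes Q_2y +a\, Q_2x\otimes Q_1y +2\, Q_2x\otimes Q_2y,\\ Q_2(x\otimes y) &= Q_0x\otimes Q_2y+Q_2x\otimes Q_0y+Q_1x\otimes Q_1y + a\, Q_2x\otimes Q_2y. \end{align*} With this tensor product and unit object $R$ (with its standard $\Gamma$-module structure, given by the $R$-module structure of $R$ together with $Q_0\cdot 1=1$, $Q_1\cdot 1=0$, $Q_2\cdot 1=0$), the category of left $\Gamma$-modules is a symmetric monoidal category. Moreover, for the element $\Psi = Q_0Q_0 +a\,Q_0Q_1 -2\,Q_1Q_1 +a^2\,Q_0Q_2 -2a\,Q_1Q_2 +4\,Q_2Q_2$ one has $\Psi(x\otimes y)=\Psi x\otimes \Psi y$ for all $x\in M$, $y\in N$.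
   Context: $R=\mathbb{Z}[a]$ is a polynomial ring. $\Gamma$ is the associative ring equipped with a ring homomorphism $\eta\colon R\to\Gamma$, generated over $R$ by $Q_0,Q_1,Q_2$ subject to: (i) commutation relations: the $Q_i$ commute with elements of $\mathbb{Z}\subset R$, and $Q_0\,a = a^2Q_0-2aQ_1+6Q_2$, $Q_1\,a=3Q_0+aQ_2$, $Q_2\,a=-aQ_0+3Q_1$; (ii) adem relations: $Q_1Q_0=2Q_2Q_1-2Q_0Q_2$ and $Q_2Q_0=Q_0Q_1+aQ_0Q_2-2Q_1Q_2$. A $\Gamma$-module means a left $\Gamma$-module; it is an $R$-module via $\eta$. The standard $\Gamma$-module structure on $R$ is the unique one extending the $R$-module structure of $R$ with $Q_0\cdot1=1$, $Q_1\cdot 1=Q_2\cdot 1=0$. *)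

theory Defs
  imports "HOL-Computational_Algebra.Polynomial"
begin

text \<open>Modules over R = Z[a] are abelian groups with an additive endomorphism
(the action of a).\<close>

record 'm gstr =
  act_a :: "'m \<Rightarrow> 'm"
  q0 :: "'m \<Rightarrow> 'm"
  q1 :: "'m \<Rightarrow> 'm"
  q2 :: "'m \<Rightarrow> 'm"

definition additive :: "('a::ab_group_add \<Rightarrow> 'b::ab_group_add) \<Rightarrow> bool" where
  "additive f \<longleftrightarrow> (\<forall>x y. f (x + y) = f x + f y)"

definition zsc :: "int \<Rightarrow> 'a::ab_group_add \<Rightarrow> 'a" where
  "zsc k x = (if 0 \<le> k then (\<Sum>i<nat k. x) else - (\<Sum>i<nat (- k). x))"

definition polyact :: "('m::ab_group_add \<Rightarrow> 'm) \<Rightarrow> int poly \<Rightarrow> 'm \<Rightarrow> 'm" where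
  "polyact A r x = (\<Sum>i\<le>degree r. zsc (coeff r i) ((A ^^ i) x))"

definition gmod :: "'m::ab_group_add gstr \<Rightarrow> bool" where
  "gmod G \<longleftrightarrow> additive (act_a G) \<and> additive (q0 G) \<and> additive (q1 G) \<and> additive (q2 G) \<and>
    (\<forall>x. q0 G (act_a G x) = act_a G (act_a G (q0 G x)) - zsc 2 (act_a G (q1 G x)) + zsc 6 (q2 G x)) \<and>
    (\<forall>x. q1 G (act_a G x) = zsc 3 (q0 G x) + act_a G (q2 G x)) \<and>
    (\<forall>x. q2 G (act_a G x) = - act_a G (q0 G x) + zsc 3 (q1 G x)) \<and>
    (\<forall>x. q1 G (q0 G x) = zsc 2 (q2 G (q1 G x)) - zsc 2 (q0 G (q2 G x))) \<and>
    (\<forall>x. q2 G (q0 G x) = q0 G (q1 G x) + act_a G (q0 G (q2 G x)) - zsc 2 (q1 G (q2 G x)))"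

definition glin :: "'m::ab_group_add gstr \<Rightarrow> 'n::ab_group_add gstr \<Rightarrow> ('m \<Rightarrow> 'n) \<Rightarrow> bool" where
  "glin G H f \<longleftrightarrow> additive f \<and>
    (\<forall>x. f (act_a G x) = act_a H (f x)) \<and> (\<forall>x. f (q0 G x) = q0 H (f x)) \<and>
    (\<forall>x. f (q1 G x) = q1 H (f x)) \<and> (\<forall>x. f (q2 G x) = q2 H (f x))"

text \<open>The tensor product over R, via its standard construction: the free abelian group
on pairs modulo the subgroup generated by biadditivity and a-balancing relations.\<close>

definition delta :: "'a \<Rightarrow> 'a \<Rightarrow> int" where
  "delta p q = (if q = p then 1 else 0)"

inductive_set tens_rel :: "('m::ab_group_add \<Rightarrow> 'm) \<Rightarrow> ('n::ab_group_add \<Rightarrow> 'n) \<Rightarrow> ('m \<times> 'n \<Rightarrow> int) set"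
  for AM AN where
  zero: "(\<lambda>_. 0) \<in> tens_rel AM AN"
| add: "s \<in> tens_rel AM AN \<Longrightarrow> t \<in> tens_rel AM AN \<Longrightarrow> (\<lambda>p. s p + t p) \<in> tens_rel AM AN"
| neg: "s \<in> tens_rel AM AN \<Longrightarrow> (\<lambda>p. - s p) \<in> tens_rel AM AN"
| addl: "(\<lambda>p. delta (x + x', y) p - delta (x, y) p - delta (x', y) p) \<in> tens_rel AM AN"
| addr: "(\<lambda>p. delta (x, y + y') p - delta (x, y) p - delta (x, y') p) \<in> tens_rel AM AN"
| bal: "(\<lambda>p. delta (AM x, y) p - delta (x, AN y) p) \<in> tens_rel AM AN"

definition fsupp :: "('a \<Rightarrow> int) \<Rightarrow> bool" where
  "fsupp s \<longleftrightarrow> finite {p. s p \<noteq> 0}"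

definition teval :: "('m \<Rightarrow> 'n \<Rightarrow> 't::ab_group_add) \<Rightarrow> ('m \<times> 'n \<Rightarrow> int) \<Rightarrow> 't" where
  "teval tp s = (\<Sum>p\<in>{p. s p \<noteq> 0}. zsc (s p) (tp (fst p) (snd p)))"

definition is_tensor :: "('m::ab_group_add \<Rightarrow> 'm) \<Rightarrow> ('n::ab_group_add \<Rightarrow> 'n) \<Rightarrow> ('t::ab_group_add \<Rightarrow> 't)
    \<Rightarrow> ('m \<Rightarrow> 'n \<Rightarrow> 't) \<Rightarrow> bool" where
  "is_tensor AM AN AT tp \<longleftrightarrow> additive AT \<and>
    (\<forall>x x' y. tp (x + x') y = tp x y + tp x' y) \<and>
    (\<forall>x y y'. tp x (y + y') = tp x y + tp x y') \<and>
    (\<forall>x y. tp (AM x) y = AT (tp x y)) \<and> (\<forall>x y. tp x (AN y) = AT (tp x y)) \<and>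
    (\<forall>z. \<exists>s. fsupp s \<and> z = teval tp s) \<and>
    (\<forall>s. fsupp s \<longrightarrow> (teval tp s = 0 \<longleftrightarrow> s \<in> tens_rel AM AN))"

definition gtensor :: "'m::ab_group_add gstr \<Rightarrow> 'n::ab_group_add gstr \<Rightarrow> ('m \<Rightarrow> 'n \<Rightarrow> 't::ab_group_add)
    \<Rightarrow> 't gstr \<Rightarrow> bool" where
  "gtensor M N tp T \<longleftrightarrow> is_tensor (act_a M) (act_a N) (act_a T) tp \<and>
    additive (q0 T) \<and> additive (q1 T) \<and> additive (q2 T) \<and>
    (\<forall>x y. q0 T (tp x y) = tp (q0 M x) (q0 N y) + zsc 2 (tp (q1 M x) (q2 N y))
                          + zsc 2 (tp (q2 M x) (q1 N y))) \<and>
    (\<forall>x y. q1 T (tp x y) = tp (q0 M x) (q1 N y) + tp (q1 M x) (q0 N y)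
                          + act_a T (tp (q1 M x) (q2 N y)) + act_a T (tp (q2 M x) (q1 N y))
                          + zsc 2 (tp (q2 M x) (q2 N y))) \<and>
    (\<forall>x y. q2 T (tp x y) = tp (q0 M x) (q2 N y) + tp (q2 M x) (q0 N y)
                          + tp (q1 M x) (q1 N y) + act_a T (tp (q2 M x) (q2 N y)))"

definition std_unit :: "int poly gstr \<Rightarrow> bool" where
  "std_unit U \<longleftrightarrow> gmod U \<and> act_a U = (\<lambda>r. [:0, 1:] * r) \<and>
     q0 U 1 = 1 \<and> q1 U 1 = 0 \<and> q2 U 1 = 0"

definition psi :: "'m::ab_group_add gstr \<Rightarrow> 'm \<Rightarrow> 'm" where
  "psi G x = q0 G (q0 G x) + act_a G (q0 G (q1 G x)) - zsc 2 (q1 G (q1 G x))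
     + act_a G (act_a G (q0 G (q2 G x))) - zsc 2 (act_a G (q1 G (q2 G x)))
     + zsc 4 (q2 G (q2 G x))"

end

theory Submission
  imports Defs
begin

text \<open>Everything is reduced to pure tensors. The Cartan formulas are biadditive and \<open>a\<close>-balanced in
  \<open>(x, y)\<close>, so the universal property of \<open>M \<otimes>\<^sub>R N\<close> turns them into additive operators, and two
  additive maps out of \<open>M \<otimes>\<^sub>R N\<close> agreeing on pure tensors are equal. Each relation of \<open>\<Gamma>\<close> on
  \<open>M \<otimes>\<^sub>R N\<close>, the identity \<open>\<Psi>(x \<otimes> y) = \<Psi>x \<otimes> \<Psi>y\<close>, and the \<open>\<Gamma>\<close>-linearity of the associator,
  unitors and symmetry thus become, on (iterated) pure tensors, identities between expressions in
  the \<open>Q\<^sub>i x\<close> and \<open>Q\<^sub>j y\<close>, which follow from the relations of \<open>\<Gamma>\<close> in the factors by normalisation.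
  On the unit \<open>R\<close> the operators are forced by \<open>Q\<^sub>i 1\<close> and the commutation relations; the Adem
  relations then hold in \<open>R\<close> because multiplication \<open>R \<times> R \<rightarrow> R\<close> satisfies the Cartan formulas,
  so by induction on the degree they pass from \<open>a\<close> and \<open>p\<close> to \<open>a p\<close>.\<close>

lemma zsc_of_nat: "zsc (int n) x = (\<Sum>i<n. x)"
  by (simp add: zsc_def)

lemma zsc_zero_left [simp]: "zsc 0 x = 0"
  by (simp add: zsc_def)

lemma zsc_minus_of_nat: "zsc (- int n) x = - (\<Sum>i<n. x)"
  by (simp add: zsc_def)

lemma zsc_succ: "zsc (k + 1) x = zsc k x + x"
proof (cases k)
  case (nonneg n)
  then show ?thesis using zsc_of_nat[of "Suc n" x] zsc_of_nat[of n x] by (simp add: add.commute)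
next
  case (neg n)
  then show ?thesis using zsc_minus_of_nat[of "Suc n" x] zsc_minus_of_nat[of n x] by simp
qed

lemma zsc_pred: "zsc (k - 1) x = zsc k x - x"
  using zsc_succ[of "k - 1" x] by simp

lemma zsc_left_distrib: "zsc (k + l) x = zsc k x + zsc l x"
proof (induct l rule: int_induct[where k=0])
  case base
  then show ?case by simp
next
  case (step1 i)
  have "zsc (k + (i + 1)) x = zsc (k + i) x + x"
    using zsc_succ[of "k + i" x] by (simp only: add.assoc)
  then show ?case using step1 by (simp add: zsc_succ)
next
  case (step2 i)
  have "zsc (k + (i - 1)) x = zsc (k + i) x - x"
    using zsc_pred[of "k + i" x] by (simp only: add_diff_eq)
  then show ?case using step2 by (simp add: zsc_pred)
qed

lemma zsc_one [simp]: "zsc 1 x = x"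
  using zsc_succ[of 0 x] by simp

lemma zsc_minus_left: "zsc (- k) x = - zsc k x"
  using zsc_left_distrib[of k "- k" x] by (simp add: eq_neg_iff_add_eq_0 add.commute)

lemma zsc_zero_right [simp]: "zsc k 0 = 0"
  by (induct k rule: int_induct[where k=0]) (simp_all add: zsc_succ zsc_pred)

lemma zsc_right_distrib: "zsc k (x + y) = zsc k x + zsc k y"
  by (induct k rule: int_induct[where k=0]) (simp_all add: zsc_succ zsc_pred algebra_simps)

lemma zsc_minus_right: "zsc k (- x) = - zsc k x"
  by (induct k rule: int_induct[where k=0]) (simp_all add: zsc_succ zsc_pred algebra_simps)

lemma zsc_right_diff_distrib: "zsc k (x - y) = zsc k x - zsc k y"
  by (simp only: diff_conv_add_uminus zsc_right_distrib zsc_minus_right)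

lemma zsc_numeral:
  "zsc (numeral (Num.Bit0 n)) x = zsc (numeral n) x + zsc (numeral n) x"
  "zsc (numeral (Num.Bit1 n)) x = zsc (numeral n) x + zsc (numeral n) x + x"
  by (simp_all only: numeral_Bit0 numeral_Bit1 zsc_left_distrib zsc_one)

lemmas zsc_simps = zsc_numeral zsc_right_distrib zsc_right_diff_distrib zsc_minus_right

lemma zsc_eq_of_int_mult: "zsc k (x::'a::ring_1) = of_int k * x"
  by (induct k rule: int_induct[where k=0]) (simp_all add: zsc_succ zsc_pred algebra_simps)

lemma additive_add: "additive f \<Longrightarrow> f (x + y) = f x + f y"
  unfolding additive_def by blast

lemma additive_0: "additive f \<Longrightarrow> f 0 = 0"
  using additive_add[of f 0 0] by simp

lemma additive_neg: "additive f \<Longrightarrow> f (- x) = - f x"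
  using additive_add[of f "- x" x] additive_0[of f] by (simp add: eq_neg_iff_add_eq_0)

lemma additive_diff: "additive f \<Longrightarrow> f (x - y) = f x - f y"
  by (simp only: diff_conv_add_uminus additive_add additive_neg)

lemma additive_zsc: "additive f \<Longrightarrow> f (zsc k x) = zsc k (f x)"
  by (induct k rule: int_induct[where k=0]) (simp_all add: additive_0 zsc_succ zsc_pred additive_add additive_diff)

lemmas additive_simps = additive_add additive_diff additive_neg additive_0 additive_zsc

lemma additive_sum: "additive f \<Longrightarrow> f (sum g S) = (\<Sum>i\<in>S. f (g i))"
  by (induct S rule: infinite_finite_induct) (simp_all add: additive_0 additive_add)

lemma additive_comp: "additive f \<Longrightarrow> additive g \<Longrightarrow> additive (\<lambda>z. f (g z))"
  unfolding additive_def by simp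

lemma additive_plus: "additive f \<Longrightarrow> additive g \<Longrightarrow> additive (\<lambda>z. f z + g z)"
  unfolding additive_def by (simp add: algebra_simps)

lemma additive_id: "additive (\<lambda>z. z)"
  unfolding additive_def by simp

lemma fsupp_zero: "fsupp (\<lambda>p. 0)"
  unfolding fsupp_def by simp

lemma fsupp_delta: "fsupp (delta a)"
  unfolding fsupp_def delta_def by (rule finite_subset[of _ "{a}"]) auto

lemma fsupp_neg: "fsupp s \<Longrightarrow> fsupp (\<lambda>p. - s p)"
  unfolding fsupp_def by simp

lemma fsupp_add: "fsupp s \<Longrightarrow> fsupp t \<Longrightarrow> fsupp (\<lambda>p. s p + t p)"
  unfolding fsupp_def by (rule finite_subset[of _ "{p. s p \<noteq> 0} \<union> {p. t p \<noteq> 0}"]) auto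

lemma fsupp_diff: "fsupp s \<Longrightarrow> fsupp t \<Longrightarrow> fsupp (\<lambda>p. s p - t p)"
  unfolding fsupp_def by (rule finite_subset[of _ "{p. s p \<noteq> 0} \<union> {p. t p \<noteq> 0}"]) auto

lemma teval_superset:
  assumes "finite S" "{p. s p \<noteq> 0} \<subseteq> S"
  shows "teval f s = (\<Sum>p\<in>S. zsc (s p) (f (fst p) (snd p)))"
  unfolding teval_def by (rule sum.mono_neutral_left) (use assms in auto)

lemma teval_zero: "teval f (\<lambda>p. 0) = 0"
  unfolding teval_def by simp

lemma teval_delta: "teval f (delta a) = f (fst a) (snd a)"
  using teval_superset[of "{a}" "delta a" f] by (auto simp: delta_def)

lemma teval_neg: "teval f (\<lambda>p. - s p) = - teval f s"
  unfolding teval_def by (simp add: zsc_minus_left sum_negf)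

lemma teval_add:
  assumes "fsupp s" "fsupp t"
  shows "teval f (\<lambda>p. s p + t p) = teval f s + teval f t"
proof -
  let ?S = "{p. s p \<noteq> 0} \<union> {p. t p \<noteq> 0}"
  have fin: "finite ?S" using assms unfolding fsupp_def by simp
  have "teval f (\<lambda>p. s p + t p) = (\<Sum>p\<in>?S. zsc (s p + t p) (f (fst p) (snd p)))"
    by (rule teval_superset[OF fin]) auto
  also have "\<dots> = (\<Sum>p\<in>?S. zsc (s p) (f (fst p) (snd p))) + (\<Sum>p\<in>?S. zsc (t p) (f (fst p) (snd p)))"
    by (simp add: zsc_left_distrib sum.distrib)
  also have "\<dots> = teval f s + teval f t"
    using teval_superset[OF fin, of s f] teval_superset[OF fin, of t f] by auto
  finally show ?thesis .
qed

lemma teval_diff: "fsupp s \<Longrightarrow> fsupp t \<Longrightarrow> teval f (\<lambda>p. s p - t p) = teval f s - teval f t"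
  using teval_add[of s "\<lambda>p. - t p" f] by (simp add: fsupp_neg teval_neg)

lemma additive_teval: "additive g \<Longrightarrow> g (teval f s) = teval (\<lambda>x y. g (f x y)) s"
  unfolding teval_def by (simp add: additive_sum additive_zsc)

lemma teval_tens_rel:
  assumes "s \<in> tens_rel AM AN"
    and Bl: "\<And>x x' y. B (x + x') y = B x y + B x' y"
    and Br: "\<And>x y y'. B x (y + y') = B x y + B x y'"
    and Bb: "\<And>x y. B (AM x) y = B x (AN y)"
  shows "fsupp s \<and> teval B s = 0"
  using assms(1)
proof induct
  case zero
  then show ?case by (simp add: fsupp_zero teval_zero)
next
  case (add s t)
  then show ?case by (simp add: fsupp_add teval_add)
next
  case (neg s)
  then show ?case by (simp add: fsupp_neg teval_neg)
next
  case (addl x x' y)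
  have f: "fsupp (\<lambda>p. delta (x + x', y) p - delta (x, y) p)" by (intro fsupp_diff fsupp_delta)
  show ?case
    using teval_diff[OF f fsupp_delta, of B] teval_diff[OF fsupp_delta fsupp_delta, of B "(x + x', y)" "(x, y)"]
    by (simp add: teval_delta Bl fsupp_diff f fsupp_delta)
next
  case (addr x y y')
  have f: "fsupp (\<lambda>p. delta (x, y + y') p - delta (x, y) p)" by (intro fsupp_diff fsupp_delta)
  show ?case
    using teval_diff[OF f fsupp_delta, of B] teval_diff[OF fsupp_delta fsupp_delta, of B "(x, y + y')" "(x, y)"]
    by (simp add: teval_delta Br fsupp_diff f fsupp_delta)
next
  case (bal x y)
  show ?case
    using teval_diff[OF fsupp_delta fsupp_delta, of B "(AM x, y)" "(x, AN y)"]
    by (simp add: teval_delta Bb fsupp_diff fsupp_delta)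
qed

lemma is_tensorD:
  assumes "is_tensor AM AN AT tp"
  shows "additive AT" "additive (\<lambda>x. tp x y)" "additive (\<lambda>y. tp x y)"
    "tp (AM x) y = AT (tp x y)" "tp x (AN y) = AT (tp x y)"
    "\<exists>s. fsupp s \<and> z = teval tp s"
    "fsupp s \<Longrightarrow> teval tp s = 0 \<longleftrightarrow> s \<in> tens_rel AM AN"
  using assms unfolding is_tensor_def additive_def by blast+

lemma is_tensor_simps:
  assumes T: "is_tensor AM AN AT tp"
  shows "tp (x + x') y = tp x y + tp x' y" "tp (x - x') y = tp x y - tp x' y" "tp (- x) y = - tp x y"
    "tp 0 y = 0" "tp (zsc k x) y = zsc k (tp x y)"
    "tp x (y + y') = tp x y + tp x y'" "tp x (y - y') = tp x y - tp x y'" "tp x (- y) = - tp x y"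
    "tp x 0 = 0" "tp x (zsc k y) = zsc k (tp x y)"
    "tp (AM x) y = AT (tp x y)" "tp x (AN y) = AT (tp x y)"
    "AT (u + v) = AT u + AT v" "AT (u - v) = AT u - AT v" "AT (- u) = - AT u" "AT 0 = 0"
    "AT (zsc k u) = zsc k (AT u)"
  using additive_simps[OF is_tensorD(2)[OF T, of y]] additive_simps[OF is_tensorD(3)[OF T, of x]]
    additive_simps[OF is_tensorD(1)[OF T]] is_tensorD(4,5)[OF T] by auto

lemma tensor_ext:
  assumes T: "is_tensor AM AN AT tp" and f: "additive f" and g: "additive g"
    and fg: "\<And>x y. f (tp x y) = g (tp x y)"
  shows "f z = g z"
proof -
  obtain s where "z = teval tp s" using is_tensorD(6)[OF T] by blast
  then show ?thesis using additive_teval[OF f, of tp s] additive_teval[OF g, of tp s] fg by simp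
qed

lemma tensor_lift:
  assumes T: "is_tensor AM AN AT tp"
    and Bl: "\<And>x x' y. B (x + x') y = B x y + B x' y"
    and Br: "\<And>x y y'. B x (y + y') = B x y + B x y'"
    and Bb: "\<And>x y. B (AM x) y = B x (AN y)"
  shows "\<exists>h. additive h \<and> (\<forall>x y. h (tp x y) = B x y)"
proof -
  have well_defined: "teval B s = teval B t"
    if "fsupp s" "fsupp t" "teval tp s = teval tp t" for s t
  proof -
    have "fsupp (\<lambda>p. s p - t p)" using that by (simp add: fsupp_diff)
    moreover have "teval tp (\<lambda>p. s p - t p) = 0" using teval_diff[OF that(1,2), of tp] that(3) by simp
    ultimately have "(\<lambda>p. s p - t p) \<in> tens_rel AM AN" using is_tensorD(7)[OF T] by blast
    then have "teval B (\<lambda>p. s p - t p) = 0" using teval_tens_rel[OF _ Bl Br Bb] by blast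
    then show ?thesis using teval_diff[OF that(1,2), of B] by simp
  qed
  define rep where "rep z = (SOME s. fsupp s \<and> z = teval tp s)" for z
  have rep: "fsupp (rep z) \<and> z = teval tp (rep z)" for z
    unfolding rep_def by (rule someI_ex[OF is_tensorD(6)[OF T]])
  define h where "h z = teval B (rep z)" for z
  have h_teval: "h z = teval B s" if "fsupp s" "z = teval tp s" for z s
    unfolding h_def using well_defined[of "rep z" s] rep[of z] that by metis
  have "additive h"
    unfolding additive_def
  proof (intro allI)
    fix z z'
    have "h (z + z') = teval B (\<lambda>p. rep z p + rep z' p)"
      by (rule h_teval) (use rep[of z] rep[of z'] in \<open>simp_all add: fsupp_add teval_add\<close>)
    then show "h (z + z') = h z + h z'" using rep[of z] rep[of z'] by (simp add: teval_add h_def)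
  qed
  moreover have "h (tp x y) = B x y" for x y
    using h_teval[OF fsupp_delta, of "tp x y" "(x, y)"] by (simp add: teval_delta)
  ultimately show ?thesis by blast
qed

lemma tensor_ext_nested_left:
  assumes T1: "is_tensor AM AN AT1 tp1" and T2: "is_tensor AT1 AP AT2 tp2"
    and f: "additive f" and g: "additive g"
    and fg: "\<And>x y z. f (tp2 (tp1 x y) z) = g (tp2 (tp1 x y) z)"
  shows "f w = g w"
proof (rule tensor_ext[OF T2 f g])
  fix t z
  show "f (tp2 t z) = g (tp2 t z)"
    by (rule tensor_ext[OF T1 additive_comp[OF f is_tensorD(2)[OF T2]]
          additive_comp[OF g is_tensorD(2)[OF T2]]]) (rule fg)
qed

lemma tensor_ext_nested_right:
  assumes T3: "is_tensor AN AP AT3 tp3" and T4: "is_tensor AM AT3 AT4 tp4"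
    and f: "additive f" and g: "additive g"
    and fg: "\<And>x y z. f (tp4 x (tp3 y z)) = g (tp4 x (tp3 y z))"
  shows "f w = g w"
proof (rule tensor_ext[OF T4 f g])
  fix x t
  show "f (tp4 x t) = g (tp4 x t)"
    by (rule tensor_ext[OF T3 additive_comp[OF f is_tensorD(3)[OF T4]]
          additive_comp[OF g is_tensorD(3)[OF T4]]]) (rule fg)
qed

lemma tensor_lift_nested_left:
  assumes T1: "is_tensor AM AN AT1 tp1" and T2: "is_tensor AT1 AP AT2 tp2"
    and Bx: "\<And>x x' y z. B (x + x') y z = B x y z + B x' y z"
    and By: "\<And>x y y' z. B x (y + y') z = B x y z + B x y' z"
    and Bz: "\<And>x y z z'. B x y (z + z') = B x y z + B x y z'"
    and Bxy: "\<And>x y z. B (AM x) y z = B x (AN y) z"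
    and Byz: "\<And>x y z. B x (AN y) z = B x y (AP z)"
  shows "\<exists>h. additive h \<and> (\<forall>x y z. h (tp2 (tp1 x y) z) = B x y z)"
proof -
  have "\<forall>z. \<exists>g. additive g \<and> (\<forall>x y. g (tp1 x y) = B x y z)"
    by (intro allI tensor_lift[OF T1]) (simp_all add: Bx By Bxy)
  then obtain G where G: "\<And>z. additive (G z)" and G_tp: "\<And>x y z. G z (tp1 x y) = B x y z"
    by metis
  have G_add: "G (z + z') t = G z t + G z' t" for z z' t
    by (rule tensor_ext[OF T1 G additive_plus[OF G G]]) (simp add: G_tp Bz)
  have G_bal: "G z (AT1 t) = G (AP z) t" for z t
    by (rule tensor_ext[OF T1 additive_comp[OF G is_tensorD(1)[OF T1]] G])
      (simp add: G_tp Bxy Byz flip: is_tensorD(4)[OF T1])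
  obtain h where "additive h" "\<And>t z. h (tp2 t z) = G z t"
    using tensor_lift[OF T2, of "\<lambda>t z. G z t"] additive_add[OF G] G_add G_bal by metis
  then show ?thesis by (auto simp: G_tp)
qed

lemma tensor_lift_nested_right:
  assumes T3: "is_tensor AN AP AT3 tp3" and T4: "is_tensor AM AT3 AT4 tp4"
    and Bx: "\<And>x x' y z. B (x + x') y z = B x y z + B x' y z"
    and By: "\<And>x y y' z. B x (y + y') z = B x y z + B x y' z"
    and Bz: "\<And>x y z z'. B x y (z + z') = B x y z + B x y z'"
    and Bxy: "\<And>x y z. B (AM x) y z = B x (AN y) z"
    and Byz: "\<And>x y z. B x (AN y) z = B x y (AP z)"
  shows "\<exists>h. additive h \<and> (\<forall>x y z. h (tp4 x (tp3 y z)) = B x y z)"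
proof -
  have "\<forall>x. \<exists>g. additive g \<and> (\<forall>y z. g (tp3 y z) = B x y z)"
    by (intro allI tensor_lift[OF T3]) (simp_all add: By Bz Byz)
  then obtain F where F: "\<And>x. additive (F x)" and F_tp: "\<And>x y z. F x (tp3 y z) = B x y z"
    by metis
  have F_add: "F (x + x') t = F x t + F x' t" for x x' t
    by (rule tensor_ext[OF T3 F additive_plus[OF F F]]) (simp add: F_tp Bx)
  have F_bal: "F (AM x) t = F x (AT3 t)" for x t
    by (rule tensor_ext[OF T3 F additive_comp[OF F is_tensorD(1)[OF T3]]])
      (simp add: F_tp Bxy flip: is_tensorD(4)[OF T3])
  obtain h where "additive h" "\<And>x t. h (tp4 x t) = F x t"
    using tensor_lift[OF T4, of F] additive_add[OF F] F_add F_bal by metis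
  then show ?thesis by (auto simp: F_tp)
qed

definition gamma_comm :: "'m::ab_group_add gstr \<Rightarrow> bool" where
  "gamma_comm G \<longleftrightarrow> additive (act_a G) \<and> additive (q0 G) \<and> additive (q1 G) \<and> additive (q2 G) \<and>
    (\<forall>x. q0 G (act_a G x) = act_a G (act_a G (q0 G x)) - zsc 2 (act_a G (q1 G x)) + zsc 6 (q2 G x)) \<and>
    (\<forall>x. q1 G (act_a G x) = zsc 3 (q0 G x) + act_a G (q2 G x)) \<and>
    (\<forall>x. q2 G (act_a G x) = - act_a G (q0 G x) + zsc 3 (q1 G x))"

definition adem_at :: "'m::ab_group_add gstr \<Rightarrow> 'm \<Rightarrow> bool" where
  "adem_at G x \<longleftrightarrow> q1 G (q0 G x) = zsc 2 (q2 G (q1 G x)) - zsc 2 (q0 G (q2 G x)) \<and>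
     q2 G (q0 G x) = q0 G (q1 G x) + act_a G (q0 G (q2 G x)) - zsc 2 (q1 G (q2 G x))"

lemma gmod_iff: "gmod G \<longleftrightarrow> gamma_comm G \<and> (\<forall>x. adem_at G x)"
  unfolding gmod_def gamma_comm_def adem_at_def by blast

lemma gamma_commD:
  assumes "gamma_comm G"
  shows "additive (act_a G)" "additive (q0 G)" "additive (q1 G)" "additive (q2 G)"
    "q0 G (act_a G x) = act_a G (act_a G (q0 G x)) - zsc 2 (act_a G (q1 G x)) + zsc 6 (q2 G x)"
    "q1 G (act_a G x) = zsc 3 (q0 G x) + act_a G (q2 G x)"
    "q2 G (act_a G x) = - act_a G (q0 G x) + zsc 3 (q1 G x)"
  using assms unfolding gamma_comm_def by blast+

lemma gamma_comm_simps:
  assumes "gamma_comm G"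
  shows "act_a G (x + y) = act_a G x + act_a G y" "act_a G (x - y) = act_a G x - act_a G y"
    "act_a G (- x) = - act_a G x" "act_a G 0 = 0" "act_a G (zsc k x) = zsc k (act_a G x)"
    "q0 G (x + y) = q0 G x + q0 G y" "q0 G (x - y) = q0 G x - q0 G y"
    "q0 G (- x) = - q0 G x" "q0 G 0 = 0" "q0 G (zsc k x) = zsc k (q0 G x)"
    "q1 G (x + y) = q1 G x + q1 G y" "q1 G (x - y) = q1 G x - q1 G y"
    "q1 G (- x) = - q1 G x" "q1 G 0 = 0" "q1 G (zsc k x) = zsc k (q1 G x)"
    "q2 G (x + y) = q2 G x + q2 G y" "q2 G (x - y) = q2 G x - q2 G y"
    "q2 G (- x) = - q2 G x" "q2 G 0 = 0" "q2 G (zsc k x) = zsc k (q2 G x)"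
    "q0 G (act_a G x) = act_a G (act_a G (q0 G x)) - zsc 2 (act_a G (q1 G x)) + zsc 6 (q2 G x)"
    "q1 G (act_a G x) = zsc 3 (q0 G x) + act_a G (q2 G x)"
    "q2 G (act_a G x) = - act_a G (q0 G x) + zsc 3 (q1 G x)"
  using assms unfolding gamma_comm_def by (simp_all add: additive_simps)

lemma adem_at_add:
  assumes G: "gamma_comm G" and x: "adem_at G x" and y: "adem_at G y"
  shows "adem_at G (x + y)"
proof -
  note adem = x[unfolded adem_at_def] y[unfolded adem_at_def]
  show ?thesis
    unfolding adem_at_def by (simp add: gamma_comm_simps[OF G] adem zsc_right_distrib zsc_right_diff_distrib algebra_simps)
qed

definition cartan_q0 :: "'m::ab_group_add gstr \<Rightarrow> 'n::ab_group_add gstr \<Rightarrow> ('m \<Rightarrow> 'n \<Rightarrow> 't::ab_group_add)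
    \<Rightarrow> 'm \<Rightarrow> 'n \<Rightarrow> 't" where
  "cartan_q0 M N tp x y = tp (q0 M x) (q0 N y) + zsc 2 (tp (q1 M x) (q2 N y)) + zsc 2 (tp (q2 M x) (q1 N y))"

definition cartan_q1 :: "'m::ab_group_add gstr \<Rightarrow> 'n::ab_group_add gstr \<Rightarrow> ('t::ab_group_add \<Rightarrow> 't)
    \<Rightarrow> ('m \<Rightarrow> 'n \<Rightarrow> 't) \<Rightarrow> 'm \<Rightarrow> 'n \<Rightarrow> 't" where
  "cartan_q1 M N AT tp x y = tp (q0 M x) (q1 N y) + tp (q1 M x) (q0 N y) + AT (tp (q1 M x) (q2 N y))
     + AT (tp (q2 M x) (q1 N y)) + zsc 2 (tp (q2 M x) (q2 N y))"

definition cartan_q2 :: "'m::ab_group_add gstr \<Rightarrow> 'n::ab_group_add gstr \<Rightarrow> ('t::ab_group_add \<Rightarrow> 't)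
    \<Rightarrow> ('m \<Rightarrow> 'n \<Rightarrow> 't) \<Rightarrow> 'm \<Rightarrow> 'n \<Rightarrow> 't" where
  "cartan_q2 M N AT tp x y = tp (q0 M x) (q2 N y) + tp (q2 M x) (q0 N y) + tp (q1 M x) (q1 N y)
     + AT (tp (q2 M x) (q2 N y))"

lemmas cartan_defs = cartan_q0_def cartan_q1_def cartan_q2_def

text \<open>Only a biadditive \<open>a\<close>-balanced pairing is assumed here, not a universal one, so that the
  multiplication \<open>R \<times> R \<rightarrow> R\<close> qualifies while \<open>R\<close> is still being made a \<open>\<Gamma>\<close>-module.\<close>

locale cartan_pairing =
  fixes M :: "'m::ab_group_add gstr" and N :: "'n::ab_group_add gstr"
    and AT :: "'t::ab_group_add \<Rightarrow> 't" and tp :: "'m \<Rightarrow> 'n \<Rightarrow> 't"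
  assumes comm_M: "gamma_comm M" and comm_N: "gamma_comm N" and additive_AT: "additive AT"
    and tp_add_left: "\<And>x x' y. tp (x + x') y = tp x y + tp x' y"
    and tp_add_right: "\<And>x y y'. tp x (y + y') = tp x y + tp x y'"
    and tp_act_left: "\<And>x y. tp (act_a M x) y = AT (tp x y)"
    and tp_act_right: "\<And>x y. tp x (act_a N y) = AT (tp x y)"
begin

abbreviation "B0 \<equiv> cartan_q0 M N tp"
abbreviation "B1 \<equiv> cartan_q1 M N AT tp"
abbreviation "B2 \<equiv> cartan_q2 M N AT tp"

lemma additive_tp_left: "additive (\<lambda>x. tp x y)"
  unfolding additive_def using tp_add_left by blast

lemma additive_tp_right: "additive (\<lambda>y. tp x y)"
  unfolding additive_def using tp_add_right by blast

lemmas pairing_simps =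
  gamma_comm_simps[OF comm_M] gamma_comm_simps[OF comm_N] additive_simps[OF additive_AT]
  additive_simps[OF additive_tp_left] additive_simps[OF additive_tp_right]
  tp_act_left tp_act_right zsc_simps

lemma cartan_biadditive:
  "B0 (x + x') y = B0 x y + B0 x' y" "B0 x (y + y') = B0 x y + B0 x y'"
  "B1 (x + x') y = B1 x y + B1 x' y" "B1 x (y + y') = B1 x y + B1 x y'"
  "B2 (x + x') y = B2 x y + B2 x' y" "B2 x (y + y') = B2 x y + B2 x y'"
  unfolding cartan_defs by (simp_all add: pairing_simps algebra_simps)

lemma cartan_balanced:
  "B0 (act_a M x) y = B0 x (act_a N y)"
  "B1 (act_a M x) y = B1 x (act_a N y)"
  "B2 (act_a M x) y = B2 x (act_a N y)"
  unfolding cartan_defs by (simp_all add: pairing_simps algebra_simps)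

lemma cartan_comm:
  "B0 (act_a M x) y = AT (AT (B0 x y)) - zsc 2 (AT (B1 x y)) + zsc 6 (B2 x y)"
  "B1 (act_a M x) y = zsc 3 (B0 x y) + AT (B2 x y)"
  "B2 (act_a M x) y = - AT (B0 x y) + zsc 3 (B1 x y)"
  unfolding cartan_defs by (simp_all add: pairing_simps algebra_simps)

end

locale cartan_tensor = cartan_pairing M N AT tp
  for M :: "'m::ab_group_add gstr" and N :: "'n::ab_group_add gstr"
    and AT :: "'t::ab_group_add \<Rightarrow> 't" and tp +
  fixes T :: "'t gstr"
  assumes act_T: "act_a T = AT" and comm_T: "gamma_comm T"
    and q0_tp: "\<And>x y. q0 T (tp x y) = B0 x y"
    and q1_tp: "\<And>x y. q1 T (tp x y) = B1 x y"
    and q2_tp: "\<And>x y. q2 T (tp x y) = B2 x y"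
begin

lemmas tensor_simps = gamma_comm_simps[OF comm_T, unfolded act_T] q0_tp q1_tp q2_tp

lemma adem_at_tp:
  assumes "adem_at M x" "adem_at N y"
  shows "adem_at T (tp x y)"
proof -
  note adem = assms[unfolded adem_at_def, THEN conjunct1] assms[unfolded adem_at_def, THEN conjunct2]
  show ?thesis
    unfolding adem_at_def act_T by (simp add: adem tensor_simps cartan_defs pairing_simps algebra_simps)
qed

lemma psi_tp:
  assumes "adem_at M x" "adem_at N y"
  shows "psi T (tp x y) = tp (psi M x) (psi N y)"
proof -
  note adem = assms[unfolded adem_at_def, THEN conjunct1] assms[unfolded adem_at_def, THEN conjunct2]
  show ?thesis
    unfolding psi_def act_T by (simp add: adem tensor_simps cartan_defs pairing_simps algebra_simps)
qed

end

lemma cartan_pairing_of_is_tensor: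
  "gamma_comm M \<Longrightarrow> gamma_comm N \<Longrightarrow> is_tensor (act_a M) (act_a N) AT tp \<Longrightarrow> cartan_pairing M N AT tp"
  unfolding cartan_pairing_def is_tensor_def by blast

lemma gtensorD:
  assumes "gtensor M N tp T"
  shows "is_tensor (act_a M) (act_a N) (act_a T) tp" "additive (q0 T)" "additive (q1 T)" "additive (q2 T)"
    "q0 T (tp x y) = cartan_q0 M N tp x y" "q1 T (tp x y) = cartan_q1 M N (act_a T) tp x y"
    "q2 T (tp x y) = cartan_q2 M N (act_a T) tp x y"
  using assms unfolding gtensor_def cartan_defs by simp_all

lemma gtensor_cartan_tensor:
  assumes "gamma_comm M" "gamma_comm N" and T: "gtensor M N tp T"
  shows "cartan_tensor M N (act_a T) tp T"
proof -
  note G = gtensorD[OF T]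
  interpret cartan_pairing M N "act_a T" tp
    by (rule cartan_pairing_of_is_tensor[OF assms(1,2) G(1)])
  note add_T = additive_add[OF additive_AT] additive_add[OF G(2)] additive_add[OF G(3)] additive_add[OF G(4)]
  have "q0 T (act_a T z) = act_a T (act_a T (q0 T z)) - zsc 2 (act_a T (q1 T z)) + zsc 6 (q2 T z)" for z
    by (rule tensor_ext[OF G(1), of "\<lambda>z. q0 T (act_a T z)"])
      (simp_all add: additive_def add_T zsc_right_distrib algebra_simps G cartan_comm flip: tp_act_left)
  moreover have "q1 T (act_a T z) = zsc 3 (q0 T z) + act_a T (q2 T z)" for z
    by (rule tensor_ext[OF G(1), of "\<lambda>z. q1 T (act_a T z)"])
      (simp_all add: additive_def add_T zsc_right_distrib algebra_simps G cartan_comm flip: tp_act_left)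
  moreover have "q2 T (act_a T z) = - act_a T (q0 T z) + zsc 3 (q1 T z)" for z
    by (rule tensor_ext[OF G(1), of "\<lambda>z. q2 T (act_a T z)"])
      (simp_all add: additive_def add_T zsc_right_distrib algebra_simps G cartan_comm flip: tp_act_left)
  ultimately have "gamma_comm T"
    unfolding gamma_comm_def using additive_AT G(2-4) by blast
  then show ?thesis
    by unfold_locales (simp_all add: G)
qed

lemma adem_at_tensor_ext:
  assumes T: "is_tensor AM AN (act_a G) tp" and G: "gamma_comm G"
    and adem: "\<And>x y. adem_at G (tp x y)"
  shows "adem_at G z"
proof -
  note add_G = gamma_commD(1-4)[OF G, THEN additive_add]
  have "q1 G (q0 G z) = zsc 2 (q2 G (q1 G z)) - zsc 2 (q0 G (q2 G z))"
    by (rule tensor_ext[OF T, of "\<lambda>z. q1 G (q0 G z)"])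
      (use adem in \<open>simp_all add: adem_at_def additive_def add_G zsc_right_distrib algebra_simps\<close>)
  moreover have "q2 G (q0 G z) = q0 G (q1 G z) + act_a G (q0 G (q2 G z)) - zsc 2 (q1 G (q2 G z))"
    by (rule tensor_ext[OF T, of "\<lambda>z. q2 G (q0 G z)"])
      (use adem in \<open>simp_all add: adem_at_def additive_def add_G zsc_right_distrib algebra_simps\<close>)
  ultimately show ?thesis
    unfolding adem_at_def ..
qed

lemma gtensor_gmod:
  assumes M: "gmod M" and N: "gmod N" and T: "gtensor M N tp T"
  shows "gmod T"
proof -
  interpret cartan_tensor M N "act_a T" tp T
    using gtensor_cartan_tensor[OF _ _ T] M N by (simp add: gmod_iff)
  have "adem_at T (tp x y)" for x y
    using adem_at_tp M N by (simp add: gmod_iff)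
  then show ?thesis
    using adem_at_tensor_ext[OF gtensorD(1)[OF T] comm_T] comm_T by (simp add: gmod_iff)
qed

lemma gtensor_ex1:
  assumes M: "gmod M" and N: "gmod N" and T: "is_tensor (act_a M) (act_a N) AT tp"
  shows "\<exists>!T. act_a T = AT \<and> gtensor M N tp T"
proof -
  interpret cartan_pairing M N AT tp
    using cartan_pairing_of_is_tensor[OF _ _ T] M N by (simp add: gmod_iff)
  obtain h0 where h0: "additive h0" "\<And>x y. h0 (tp x y) = B0 x y"
    using tensor_lift[OF T, of B0] cartan_biadditive cartan_balanced by metis
  obtain h1 where h1: "additive h1" "\<And>x y. h1 (tp x y) = B1 x y"
    using tensor_lift[OF T, of B1] cartan_biadditive cartan_balanced by metis
  obtain h2 where h2: "additive h2" "\<And>x y. h2 (tp x y) = B2 x y"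
    using tensor_lift[OF T, of B2] cartan_biadditive cartan_balanced by metis
  define T0 where "T0 = \<lparr>act_a = AT, q0 = h0, q1 = h1, q2 = h2\<rparr>"
  have "act_a T0 = AT \<and> gtensor M N tp T0"
    using T h0 h1 h2 unfolding T0_def gtensor_def cartan_defs by simp
  moreover have "T1 = T2"
    if "act_a T1 = AT \<and> gtensor M N tp T1" "act_a T2 = AT \<and> gtensor M N tp T2" for T1 T2
  proof -
    note G1 = gtensorD[OF that(1)[THEN conjunct2]] and G2 = gtensorD[OF that(2)[THEN conjunct2]]
    have "q0 T1 z = q0 T2 z" "q1 T1 z = q1 T2 z" "q2 T1 z = q2 T2 z" for z
      by (rule tensor_ext[OF T G1(2) G2(2)] tensor_ext[OF T G1(3) G2(3)] tensor_ext[OF T G1(4) G2(4)];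
          use that in \<open>simp add: G1 G2\<close>)+
    then show ?thesis using that by (intro gstr.equality) auto
  qed
  ultimately show ?thesis by blast
qed

lemma glinD:
  assumes "glin G H f"
  shows "additive f" "f (act_a G x) = act_a H (f x)" "f (q0 G x) = q0 H (f x)"
    "f (q1 G x) = q1 H (f x)" "f (q2 G x) = q2 H (f x)"
  using assms unfolding glin_def by blast+

lemma glin_tensorI:
  assumes T: "gtensor M N tp T" and T': "gamma_comm T'" and h: "additive h"
    and "\<And>x y. h (act_a T (tp x y)) = act_a T' (h (tp x y))"
    and "\<And>x y. h (q0 T (tp x y)) = q0 T' (h (tp x y))"
    and "\<And>x y. h (q1 T (tp x y)) = q1 T' (h (tp x y))"
    and "\<And>x y. h (q2 T (tp x y)) = q2 T' (h (tp x y))"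
  shows "glin T T' h"
proof -
  note G = gtensorD(1-4)[OF T] and G' = gamma_commD(1-4)[OF T']
  show ?thesis
    unfolding glin_def
    using h assms(4-7)
      tensor_ext[OF G(1) additive_comp[OF h is_tensorD(1)[OF G(1)]] additive_comp[OF G'(1) h]]
      tensor_ext[OF G(1) additive_comp[OF h G(2)] additive_comp[OF G'(2) h]]
      tensor_ext[OF G(1) additive_comp[OF h G(3)] additive_comp[OF G'(3) h]]
      tensor_ext[OF G(1) additive_comp[OF h G(4)] additive_comp[OF G'(4) h]]
    by blast
qed

lemma gtensor_gamma_comm: "gmod M \<Longrightarrow> gmod N \<Longrightarrow> gtensor M N tp T \<Longrightarrow> gamma_comm T"
  using gtensor_gmod gmod_iff by blast

lemma gtensor_map:
  assumes f: "glin M M' f" and g: "glin N N' g"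
    and T: "gtensor M N tp T" and T': "gtensor M' N' tp' T'"
  shows "\<exists>h. additive h \<and> (\<forall>x y. h (tp x y) = tp' (f x) (g y))"
  by (rule tensor_lift[OF gtensorD(1)[OF T]])
    (simp_all add: is_tensor_simps[OF gtensorD(1)[OF T']] glinD(2)[OF f] glinD(2)[OF g]
      additive_simps[OF glinD(1)[OF f]] additive_simps[OF glinD(1)[OF g]])

lemma glin_gtensor_map:
  assumes "gmod M'" "gmod N'" and f: "glin M M' f" and g: "glin N N' g"
    and T: "gtensor M N tp T" and T': "gtensor M' N' tp' T'"
    and h: "additive h" "\<And>x y. h (tp x y) = tp' (f x) (g y)"
  shows "glin T T' h"
proof -
  note simps = is_tensor_simps[OF gtensorD(1)[OF T]] is_tensor_simps[OF gtensorD(1)[OF T']]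
    glinD(2-5)[OF f] glinD(2-5)[OF g] additive_simps[OF glinD(1)[OF f]] additive_simps[OF glinD(1)[OF g]]
  have h_act: "h (act_a T (tp x y)) = act_a T' (h (tp x y))" for x y
    by (simp add: h(2) simps flip: is_tensor_simps(11)[OF gtensorD(1)[OF T]])
  show ?thesis
    by (rule glin_tensorI[OF T gtensor_gamma_comm[OF assms(1,2) T'] h(1)])
      (simp_all add: h_act h gtensorD(5-7)[OF T] gtensorD(5-7)[OF T'] cartan_defs
         additive_simps[OF h(1)] simps zsc_simps)
qed

lemma gtensor_swap:
  assumes T: "gtensor M N tp T" and S: "gtensor N M tp' S"
  shows "\<exists>h. bij h \<and> additive h \<and> (\<forall>x y. h (tp x y) = tp' y x)"
proof -
  note TT = gtensorD(1)[OF T] and SS = gtensorD(1)[OF S]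
  have "\<exists>h. additive h \<and> (\<forall>x y. h (tp x y) = tp' y x)"
    by (rule tensor_lift[OF TT]) (simp_all add: is_tensor_simps[OF SS])
  then obtain h where h: "additive h" "\<And>x y. h (tp x y) = tp' y x" by blast
  have "\<exists>k. additive k \<and> (\<forall>y x. k (tp' y x) = tp x y)"
    by (rule tensor_lift[OF SS]) (simp_all add: is_tensor_simps[OF TT])
  then obtain k where k: "additive k" "\<And>x y. k (tp' y x) = tp x y" by blast
  have "k (h z) = z" for z
    by (rule tensor_ext[OF TT additive_comp[OF k(1) h(1)] additive_id]) (simp add: h k)
  moreover have "h (k z) = z" for z
    by (rule tensor_ext[OF SS additive_comp[OF h(1) k(1)] additive_id]) (simp add: h k)
  ultimately have "bij h" by (intro o_bij[of k]) auto
  then show ?thesis using h by blast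
qed

lemma glin_gtensor_swap:
  assumes "gmod M" "gmod N" and T: "gtensor M N tp T" and S: "gtensor N M tp' S"
    and h: "additive h" "\<And>x y. h (tp x y) = tp' y x"
  shows "glin T S h"
proof -
  note simps = is_tensor_simps[OF gtensorD(1)[OF T]] is_tensor_simps[OF gtensorD(1)[OF S]]
  have h_act: "h (act_a T (tp x y)) = act_a S (h (tp x y))" for x y
    by (simp add: h(2) simps flip: is_tensor_simps(11)[OF gtensorD(1)[OF T]])
  show ?thesis
    by (rule glin_tensorI[OF T gtensor_gamma_comm[OF assms(2,1) S] h(1)])
      (simp_all add: h_act h gtensorD(5-7)[OF T] gtensorD(5-7)[OF S] cartan_defs
         additive_simps[OF h(1)] simps zsc_simps algebra_simps)
qed

lemma gtensor_assoc:
  assumes T1: "gtensor M N tp1 T1" and T2: "gtensor T1 P tp2 T2"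
    and T3: "gtensor N P tp3 T3" and T4: "gtensor M T3 tp4 T4"
  shows "\<exists>h. bij h \<and> additive h \<and> (\<forall>x y z. h (tp2 (tp1 x y) z) = tp4 x (tp3 y z))"
proof -
  note I1 = gtensorD(1)[OF T1] and I2 = gtensorD(1)[OF T2]
    and I3 = gtensorD(1)[OF T3] and I4 = gtensorD(1)[OF T4]
  note simps = is_tensor_simps[OF I1] is_tensor_simps[OF I2] is_tensor_simps[OF I3] is_tensor_simps[OF I4]
  have "\<exists>h. additive h \<and> (\<forall>x y z. h (tp2 (tp1 x y) z) = tp4 x (tp3 y z))"
    by (rule tensor_lift_nested_left[OF I1 I2]) (simp_all add: simps)
  then obtain h where h: "additive h" "\<And>x y z. h (tp2 (tp1 x y) z) = tp4 x (tp3 y z)" by blast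
  have "\<exists>k. additive k \<and> (\<forall>x y z. k (tp4 x (tp3 y z)) = tp2 (tp1 x y) z)"
    by (rule tensor_lift_nested_right[OF I3 I4]) (simp_all add: simps)
  then obtain k where k: "additive k" "\<And>x y z. k (tp4 x (tp3 y z)) = tp2 (tp1 x y) z" by blast
  have "k (h w) = w" for w
    by (rule tensor_ext_nested_left[OF I1 I2 additive_comp[OF k(1) h(1)] additive_id]) (simp add: h k)
  moreover have "h (k w) = w" for w
    by (rule tensor_ext_nested_right[OF I3 I4 additive_comp[OF h(1) k(1)] additive_id]) (simp add: h k)
  ultimately have "bij h" by (intro o_bij[of k]) auto
  then show ?thesis using h by blast
qed

lemma glin_gtensor_assoc:
  assumes "gmod M" "gmod N" "gmod P"
    and T1: "gtensor M N tp1 T1" and T2: "gtensor T1 P tp2 T2"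
    and T3: "gtensor N P tp3 T3" and T4: "gtensor M T3 tp4 T4"
    and h: "additive h" "\<And>x y z. h (tp2 (tp1 x y) z) = tp4 x (tp3 y z)"
  shows "glin T2 T4 h"
proof -
  note I1 = gtensorD(1)[OF T1] and I2 = gtensorD(1)[OF T2]
  note G2 = gtensorD(2-4)[OF T2] and G4 = gamma_commD(1-4)[OF gtensor_gamma_comm[OF assms(1)
      gtensor_gmod[OF assms(2,3) T3] T4]]
  note simps = h additive_simps[OF h(1)] gtensorD(5-7)[OF T1] gtensorD(5-7)[OF T2]
    gtensorD(5-7)[OF T3] gtensorD(5-7)[OF T4] is_tensor_simps[OF I1] is_tensor_simps[OF I2]
    is_tensor_simps[OF gtensorD(1)[OF T3]] is_tensor_simps[OF gtensorD(1)[OF T4]] cartan_defs zsc_simps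
  have h_act: "h (act_a T2 w) = act_a T4 (h w)" for w
    by (rule tensor_ext_nested_left[OF I1 I2 additive_comp[OF h(1) is_tensorD(1)[OF I2]]
          additive_comp[OF G4(1) h(1)]])
      (simp add: simps flip: is_tensor_simps(11)[OF I1] is_tensor_simps(11)[OF I2])
  have "h (q0 T2 w) = q0 T4 (h w)" for w
    by (rule tensor_ext_nested_left[OF I1 I2 additive_comp[OF h(1) G2(1)] additive_comp[OF G4(2) h(1)]])
      (simp add: h_act simps algebra_simps)
  moreover have "h (q1 T2 w) = q1 T4 (h w)" for w
    by (rule tensor_ext_nested_left[OF I1 I2 additive_comp[OF h(1) G2(2)] additive_comp[OF G4(3) h(1)]])
      (simp add: h_act simps algebra_simps)
  moreover have "h (q2 T2 w) = q2 T4 (h w)" for w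
    by (rule tensor_ext_nested_left[OF I1 I2 additive_comp[OF h(1) G2(3)] additive_comp[OF G4(4) h(1)]])
      (simp add: h_act simps algebra_simps)
  ultimately show ?thesis
    unfolding glin_def using h(1) h_act by blast
qed

lemma pCons_eq_zsc_plus_X_mult: "pCons c (p::int poly) = zsc c 1 + [:0, 1:] * p"
  by (simp add: zsc_eq_of_int_mult of_int_poly)

text \<open>Writing \<open>r = c + a p\<close>, the values \<open>Q\<^sub>i r\<close> are forced by \<open>Q\<^sub>0 1 = 1\<close>, \<open>Q\<^sub>1 1 = Q\<^sub>2 1 = 0\<close> and the
  commutation relations; \<open>unit_step c\<close> computes \<open>(Q\<^sub>0 r, Q\<^sub>1 r, Q\<^sub>2 r)\<close> from \<open>(Q\<^sub>0 p, Q\<^sub>1 p, Q\<^sub>2 p)\<close>.\<close>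

definition unit_step :: "int \<Rightarrow> int poly \<times> int poly \<times> int poly \<Rightarrow> int poly \<times> int poly \<times> int poly" where
  "unit_step c = (\<lambda>(u0, u1, u2).
     ([:c:] + [:0, 1:] * ([:0, 1:] * u0) - 2 * ([:0, 1:] * u1) + 6 * u2,
      3 * u0 + [:0, 1:] * u2,
      - ([:0, 1:] * u0) + 3 * u1))"

definition std_gstr :: "int poly gstr" where
  "std_gstr = (let Q = (\<lambda>r. fold_coeffs unit_step r (0, 0, 0)) in
     \<lparr>act_a = (\<lambda>r. [:0, 1:] * r), q0 = (\<lambda>r. fst (Q r)), q1 = (\<lambda>r. fst (snd (Q r))),
      q2 = (\<lambda>r. snd (snd (Q r)))\<rparr>)"

lemma std_gstr_0: "q0 std_gstr 0 = 0" "q1 std_gstr 0 = 0" "q2 std_gstr 0 = 0"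
  by (simp_all add: std_gstr_def fold_coeffs_def)

lemma act_std_gstr: "act_a std_gstr = (\<lambda>r. [:0, 1:] * r)"
  by (simp add: std_gstr_def)

lemma std_gstr_pCons:
  "q0 std_gstr (pCons c p) = [:c:] + [:0, 1:] * ([:0, 1:] * q0 std_gstr p) - 2 * ([:0, 1:] * q1 std_gstr p)
     + 6 * q2 std_gstr p"
  "q1 std_gstr (pCons c p) = 3 * q0 std_gstr p + [:0, 1:] * q2 std_gstr p"
  "q2 std_gstr (pCons c p) = - ([:0, 1:] * q0 std_gstr p) + 3 * q1 std_gstr p"
proof -
  have "fold_coeffs unit_step (pCons c p) (0, 0, 0) = unit_step c (fold_coeffs unit_step p (0, 0, 0))"
  proof (cases "p = 0 \<and> c = 0")
    case True
    then show ?thesis by (simp add: fold_coeffs_def unit_step_def)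
  next
    case False
    then have "coeffs (pCons c p) = c # coeffs p" by (auto simp: cCons_def)
    then show ?thesis by (simp add: fold_coeffs_def)
  qed
  then show "q0 std_gstr (pCons c p) = [:c:] + [:0, 1:] * ([:0, 1:] * q0 std_gstr p) - 2 * ([:0, 1:] * q1 std_gstr p)
       + 6 * q2 std_gstr p"
    "q1 std_gstr (pCons c p) = 3 * q0 std_gstr p + [:0, 1:] * q2 std_gstr p"
    "q2 std_gstr (pCons c p) = - ([:0, 1:] * q0 std_gstr p) + 3 * q1 std_gstr p"
    by (simp_all add: std_gstr_def unit_step_def split: prod.split)
qed

lemma std_gstr_1: "q0 std_gstr 1 = 1" "q1 std_gstr 1 = 0" "q2 std_gstr 1 = 0"
  using std_gstr_pCons[of 1 0] by (simp_all add: std_gstr_0 pCons_one)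

lemma std_gstr_add:
  "q0 std_gstr (p + r) = q0 std_gstr p + q0 std_gstr r \<and>
   q1 std_gstr (p + r) = q1 std_gstr p + q1 std_gstr r \<and>
   q2 std_gstr (p + r) = q2 std_gstr p + q2 std_gstr r"
proof (induct p arbitrary: r)
  case 0
  then show ?case by (simp add: std_gstr_0)
next
  case (pCons c p)
  obtain d r' where r: "r = pCons d r'" by (cases r) auto
  show ?case using pCons(2)[of r'] unfolding r add_pCons std_gstr_pCons by (simp add: algebra_simps)
qed

lemma gamma_comm_std_gstr: "gamma_comm std_gstr"
  unfolding gamma_comm_def additive_def
  by (simp add: act_std_gstr std_gstr_add std_gstr_pCons zsc_eq_of_int_mult distrib_left)

locale unit_pairing = cartan_pairing M N AT tp
  for M :: "int poly gstr" and N :: "'n::ab_group_add gstr" and AT :: "'n \<Rightarrow> 'n" and tp +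
  assumes act_M: "act_a M = (\<lambda>r. [:0, 1:] * r)" and act_N: "act_a N = AT"
    and q0_M: "q0 M 1 = 1" and q1_M: "q1 M 1 = 0" and q2_M: "q2 M 1 = 0"
    and tp_1: "\<And>y. tp 1 y = y"
begin

lemma cartan_unit:
  "q0 N (tp r y) = B0 r y \<and> q1 N (tp r y) = B1 r y \<and> q2 N (tp r y) = B2 r y"
proof (induct r arbitrary: y)
  case 0
  then show ?case by (simp add: cartan_defs pairing_simps)
next
  case (pCons c p)
  have split: "pCons c p = zsc c 1 + act_a M p"
    unfolding act_M by (rule pCons_eq_zsc_plus_X_mult)
  have tp_pCons: "tp (pCons c p) y = zsc c y + AT (tp p y)"
    unfolding split by (simp add: pairing_simps tp_1)
  have "B0 (pCons c p) y = zsc c (q0 N y) + B0 (act_a M p) y"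
    "B1 (pCons c p) y = zsc c (q1 N y) + B1 (act_a M p) y"
    "B2 (pCons c p) y = zsc c (q2 N y) + B2 (act_a M p) y"
    unfolding split cartan_defs by (simp_all add: pairing_simps q0_M q1_M q2_M tp_1)
  then show ?case
    unfolding tp_pCons cartan_comm using pCons(2)[of y]
    by (simp add: gamma_comm_simps[OF comm_N, unfolded act_N])
qed

end

lemma unit_pairing_std_gstr: "unit_pairing std_gstr std_gstr (\<lambda>r. [:0, 1:] * r) (*)"
  by unfold_locales
    (simp_all add: gamma_comm_std_gstr std_gstr_1 act_std_gstr algebra_simps additive_def)

lemma adem_at_std_gstr: "adem_at std_gstr r"
proof -
  interpret unit_pairing std_gstr std_gstr "\<lambda>r. [:0, 1:] * r" "(*)"
    by (rule unit_pairing_std_gstr)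
  interpret cartan_tensor std_gstr std_gstr "\<lambda>r. [:0, 1:] * r" "(*)" std_gstr
    by unfold_locales (simp_all add: act_std_gstr gamma_comm_std_gstr cartan_unit)
  have adem_X: "adem_at std_gstr [:0, 1:]"
    unfolding adem_at_def by (simp add: act_std_gstr std_gstr_pCons std_gstr_0 zsc_eq_of_int_mult numeral_poly)
  show ?thesis
  proof (induct r)
    case 0
    then show ?case unfolding adem_at_def by (simp add: act_std_gstr std_gstr_0)
  next
    case (pCons c p)
    have "adem_at std_gstr (zsc c 1)"
      unfolding adem_at_def
      by (simp add: gamma_comm_simps[OF gamma_comm_std_gstr] act_std_gstr std_gstr_0 std_gstr_1)
    moreover have "adem_at std_gstr ([:0, 1:] * p)"
      by (rule adem_at_tp[OF adem_X pCons(2)])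
    ultimately have "adem_at std_gstr (zsc c 1 + [:0, 1:] * p)"
      by (rule adem_at_add[OF gamma_comm_std_gstr])
    then show ?case
      by (simp only: pCons_eq_zsc_plus_X_mult[of c p])
  qed
qed

lemma std_unit_std_gstr: "std_unit std_gstr"
  unfolding std_unit_def gmod_iff
  using gamma_comm_std_gstr adem_at_std_gstr act_std_gstr std_gstr_1 by blast

lemma std_unitD:
  assumes "std_unit U"
  shows "gmod U" "act_a U = (\<lambda>r. [:0, 1:] * r)" "q0 U 1 = 1" "q1 U 1 = 0" "q2 U 1 = 0"
  using assms unfolding std_unit_def by blast+

lemma polyact_superset:
  assumes "degree r \<le> n"
  shows "polyact A r x = (\<Sum>i\<le>n. zsc (coeff r i) ((A ^^ i) x))"
  unfolding polyact_def by (rule sum.mono_neutral_left) (use assms in \<open>auto simp: coeff_eq_0\<close>)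

lemma polyact_0: "polyact A 0 x = 0"
  unfolding polyact_def by simp

lemma polyact_pCons:
  assumes A: "additive A"
  shows "polyact A (pCons c p) x = zsc c x + A (polyact A p x)"
proof -
  have "polyact A (pCons c p) x = (\<Sum>i\<le>Suc (degree p). zsc (coeff (pCons c p) i) ((A ^^ i) x))"
    by (rule polyact_superset) (rule degree_pCons_le)
  also have "\<dots> = zsc c x + (\<Sum>i\<le>degree p. zsc (coeff p i) (A ((A ^^ i) x)))"
    by (subst sum.atMost_Suc_shift) (simp del: sum.atMost_Suc)
  also have "\<dots> = zsc c x + A (polyact A p x)"
    unfolding polyact_def by (simp add: additive_sum[OF A] additive_zsc[OF A])
  finally show ?thesis .
qed

lemma polyact_simps:
  assumes A: "additive A"
  shows "polyact A (r + s) x = polyact A r x + polyact A s x"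
    "polyact A r (x + y) = polyact A r x + polyact A r y"
    "polyact A r (A x) = A (polyact A r x)"
    "polyact A ([:0, 1:] * r) x = A (polyact A r x)"
    "polyact A 1 x = x"
proof -
  note A_simps = additive_simps[OF A]
  show "polyact A (r + s) x = polyact A r x + polyact A s x"
  proof (induct r arbitrary: s)
    case 0
    then show ?case by (simp add: polyact_0)
  next
    case (pCons c p)
    obtain d q where s: "s = pCons d q" by (cases s) auto
    show ?case
      unfolding s add_pCons polyact_pCons[OF A] pCons(2) by (simp add: A_simps zsc_left_distrib algebra_simps)
  qed
  show "polyact A r (x + y) = polyact A r x + polyact A r y"
    by (induct r) (simp_all add: polyact_0 polyact_pCons[OF A] A_simps zsc_right_distrib algebra_simps)
  show "polyact A r (A x) = A (polyact A r x)"
    by (induct r) (simp_all add: polyact_0 polyact_pCons[OF A] A_simps)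
  show "polyact A ([:0, 1:] * r) x = A (polyact A r x)"
    using polyact_pCons[OF A, of 0 r x] by simp
  show "polyact A 1 x = x"
    using polyact_pCons[OF A, of 1 0 x] by (simp add: polyact_0 A_simps pCons_one)
qed

lemma unit_pairing_polyact:
  assumes U: "std_unit U" and M: "gmod M"
  shows "unit_pairing U M (act_a M) (polyact (act_a M))"
proof -
  have A: "additive (act_a M)" using M by (simp add: gmod_def)
  show ?thesis
    by unfold_locales
      (use std_unitD[OF U] M A in \<open>simp_all add: gmod_iff polyact_simps[OF A] polyact_pCons[OF A]\<close>)
qed

lemma gtensor_left_unit:
  assumes U: "std_unit U" and M: "gmod M" and TL: "gtensor U M tpl TL"
  shows "\<exists>h. bij h \<and> additive h \<and> (\<forall>r x. h (tpl r x) = polyact (act_a M) r x)"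
proof -
  have A: "additive (act_a M)" using M by (simp add: gmod_def)
  note I = gtensorD(1)[OF TL] and simps = is_tensor_simps[OF gtensorD(1)[OF TL]]
  have "\<exists>h. additive h \<and> (\<forall>r x. h (tpl r x) = polyact (act_a M) r x)"
    by (rule tensor_lift[OF I]) (simp_all add: polyact_simps[OF A] polyact_pCons[OF A] std_unitD(2)[OF U])
  then obtain h where h: "additive h" "\<And>r x. h (tpl r x) = polyact (act_a M) r x" by blast
  have tpl_polyact: "tpl 1 (polyact (act_a M) r x) = tpl r x" for r x
  proof (induct r)
    case 0
    then show ?case by (simp add: polyact_0 simps)
  next
    case (pCons c p)
    have "tpl (pCons c p) x = zsc c (tpl 1 x) + act_a TL (tpl p x)"
      by (simp only: pCons_eq_zsc_plus_X_mult[of c p]) (simp add: simps std_unitD(2)[OF U, symmetric])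
    then show ?case by (simp add: polyact_pCons[OF A] simps pCons)
  qed
  have "tpl 1 (h w) = w" for w
    by (rule tensor_ext[OF I additive_comp[OF is_tensorD(3)[OF I] h(1)] additive_id])
      (simp add: h tpl_polyact)
  moreover have "h (tpl 1 x) = x" for x
    by (simp add: h polyact_simps[OF A])
  ultimately have "bij h" by (intro o_bij[of "tpl 1"]) auto
  then show ?thesis using h by blast
qed

lemma glin_gtensor_left_unit:
  assumes U: "std_unit U" and M: "gmod M" and TL: "gtensor U M tpl TL"
    and h: "additive h" "\<And>r x. h (tpl r x) = polyact (act_a M) r x"
  shows "glin TL M h"
proof -
  interpret unit_pairing U M "act_a M" "polyact (act_a M)"
    by (rule unit_pairing_polyact[OF U M])
  have A: "additive (act_a M)" using M by (simp add: gmod_def)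
  note simps = is_tensor_simps[OF gtensorD(1)[OF TL]]
  have h_act: "h (act_a TL (tpl r x)) = act_a M (h (tpl r x))" for r x
    by (simp add: h(2) polyact_simps[OF A] flip: simps(12))
  show ?thesis
    by (rule glin_tensorI[OF TL comm_N h(1)])
      (simp_all add: h_act h gtensorD(5-7)[OF TL] cartan_defs additive_simps[OF h(1)] simps
         cartan_unit pairing_simps)
qed

lemma gtensor_right_unit:
  assumes U: "std_unit U" and M: "gmod M" and TR: "gtensor M U tpr TR"
  shows "\<exists>h. bij h \<and> additive h \<and> (\<forall>x r. h (tpr x r) = polyact (act_a M) r x)"
proof -
  have A: "additive (act_a M)" using M by (simp add: gmod_def)
  note I = gtensorD(1)[OF TR] and simps = is_tensor_simps[OF gtensorD(1)[OF TR]]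
  have "\<exists>h. additive h \<and> (\<forall>x r. h (tpr x r) = polyact (act_a M) r x)"
    by (rule tensor_lift[OF I]) (simp_all add: polyact_simps[OF A] polyact_pCons[OF A] std_unitD(2)[OF U])
  then obtain h where h: "additive h" "\<And>x r. h (tpr x r) = polyact (act_a M) r x" by blast
  have tpr_polyact: "tpr (polyact (act_a M) r x) 1 = tpr x r" for r x
  proof (induct r)
    case 0
    then show ?case by (simp add: polyact_0 simps)
  next
    case (pCons c p)
    have "tpr x (pCons c p) = zsc c (tpr x 1) + act_a TR (tpr x p)"
      by (simp only: pCons_eq_zsc_plus_X_mult[of c p]) (simp add: simps std_unitD(2)[OF U, symmetric])
    then show ?case by (simp add: polyact_pCons[OF A] simps pCons)
  qed
  have "tpr (h w) 1 = w" for w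
    by (rule tensor_ext[OF I additive_comp[OF is_tensorD(2)[OF I] h(1)] additive_id])
      (simp add: h tpr_polyact)
  moreover have "h (tpr x 1) = x" for x
    by (simp add: h polyact_simps[OF A])
  ultimately have "bij h" by (intro o_bij[of "\<lambda>x. tpr x 1"]) auto
  then show ?thesis using h by blast
qed

lemma glin_gtensor_right_unit:
  assumes U: "std_unit U" and M: "gmod M" and TR: "gtensor M U tpr TR"
    and h: "additive h" "\<And>x r. h (tpr x r) = polyact (act_a M) r x"
  shows "glin TR M h"
proof -
  interpret unit_pairing U M "act_a M" "polyact (act_a M)"
    by (rule unit_pairing_polyact[OF U M])
  have A: "additive (act_a M)" using M by (simp add: gmod_def)
  note simps = is_tensor_simps[OF gtensorD(1)[OF TR]]
  have h_act: "h (act_a TR (tpr x r)) = act_a M (h (tpr x r))" for x r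
    by (simp add: h(2) polyact_simps[OF A] flip: simps(11))
  show ?thesis
    by (rule glin_tensorI[OF TR comm_N h(1)])
      (simp_all add: h_act h gtensorD(5-7)[OF TR] cartan_defs additive_simps[OF h(1)] simps
         cartan_unit pairing_simps algebra_simps)
qed

lemma gtensor_psi:
  assumes M: "gmod M" and N: "gmod N" and T: "gtensor M N tp T"
  shows "psi T (tp x y) = tp (psi M x) (psi N y)"
proof -
  interpret cartan_tensor M N "act_a T" tp T
    using gtensor_cartan_tensor[OF _ _ T] M N by (simp add: gmod_iff)
  show ?thesis
    using psi_tp M N by (simp add: gmod_iff)
qed

theorem mainTheorem3:
  shows "
   \<comment> \<open>(1) M \<otimes>_R N carries a unique Gamma-structure given by the formulas, and it is a Gamma-module\<close>
   (\<forall>(M::'m::ab_group_add gstr) (N::'n::ab_group_add gstr) (AT::'t::ab_group_add \<Rightarrow> 't) tp.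
      gmod M \<and> gmod N \<and> is_tensor (act_a M) (act_a N) AT tp \<longrightarrow>
        (\<exists>!T. act_a T = AT \<and> gtensor M N tp T) \<and>
        (\<forall>T. act_a T = AT \<and> gtensor M N tp T \<longrightarrow> gmod T)) \<and>
   \<comment> \<open>(2) functoriality of the tensor product in Gamma-linear maps\<close>
   (\<forall>(M::'m gstr) (N::'n gstr) (T::'t gstr) tp (M'::'m2::ab_group_add gstr)
      (N'::'n2::ab_group_add gstr) (T'::'t2::ab_group_add gstr) tp' f g.
      gmod M \<and> gmod N \<and> gmod M' \<and> gmod N' \<and> glin M M' f \<and> glin N N' g \<and>
      gtensor M N tp T \<and> gtensor M' N' tp' T' \<longrightarrow>
        (\<exists>h. additive h \<and> (\<forall>x y. h (tp x y) = tp' (f x) (g y))) \<and>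
        (\<forall>h. additive h \<and> (\<forall>x y. h (tp x y) = tp' (f x) (g y)) \<longrightarrow> glin T T' h)) \<and>
   \<comment> \<open>(3) the associator is a Gamma-isomorphism\<close>
   (\<forall>(M::'m gstr) (N::'n gstr) (P::'p::ab_group_add gstr) (T1::'t gstr) tp1
      (T2::'t2 gstr) tp2 (T3::'t3::ab_group_add gstr) tp3 (T4::'t4::ab_group_add gstr) tp4.
      gmod M \<and> gmod N \<and> gmod P \<and> gtensor M N tp1 T1 \<and> gtensor T1 P tp2 T2 \<and>
      gtensor N P tp3 T3 \<and> gtensor M T3 tp4 T4 \<longrightarrow>
        (\<exists>h. bij h \<and> additive h \<and> (\<forall>x y z. h (tp2 (tp1 x y) z) = tp4 x (tp3 y z))) \<and>
        (\<forall>h. additive h \<and> (\<forall>x y z. h (tp2 (tp1 x y) z) = tp4 x (tp3 y z)) \<longrightarrow> glin T2 T4 h)) \<and>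
   \<comment> \<open>(4) the unit R with its standard structure; the unitors are Gamma-isomorphisms\<close>
   (\<exists>U. std_unit U) \<and>
   (\<forall>U (M::'m gstr) (TL::'t gstr) tpl (TR::'t2 gstr) tpr.
      std_unit U \<and> gmod M \<and> gtensor U M tpl TL \<and> gtensor M U tpr TR \<longrightarrow>
        (\<exists>h. bij h \<and> additive h \<and> (\<forall>r x. h (tpl r x) = polyact (act_a M) r x)) \<and>
        (\<forall>h. additive h \<and> (\<forall>r x. h (tpl r x) = polyact (act_a M) r x) \<longrightarrow> glin TL M h) \<and>
        (\<exists>h. bij h \<and> additive h \<and> (\<forall>x r. h (tpr x r) = polyact (act_a M) r x)) \<and>
        (\<forall>h. additive h \<and> (\<forall>x r. h (tpr x r) = polyact (act_a M) r x) \<longrightarrow> glin TR M h)) \<and>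
   \<comment> \<open>(5) the symmetry is a Gamma-isomorphism\<close>
   (\<forall>(M::'m gstr) (N::'n gstr) (T::'t gstr) tp (S::'t2 gstr) tp'.
      gmod M \<and> gmod N \<and> gtensor M N tp T \<and> gtensor N M tp' S \<longrightarrow>
        (\<exists>h. bij h \<and> additive h \<and> (\<forall>x y. h (tp x y) = tp' y x)) \<and>
        (\<forall>h. additive h \<and> (\<forall>x y. h (tp x y) = tp' y x) \<longrightarrow> glin T S h)) \<and>
   \<comment> \<open>(6) Psi is multiplicative on pure tensors\<close>
   (\<forall>(M::'m gstr) (N::'n gstr) (T::'t gstr) tp.
      gmod M \<and> gmod N \<and> gtensor M N tp T \<longrightarrow>
        (\<forall>x y. psi T (tp x y) = tp (psi M x) (psi N y)))"
  apply (intro conjI)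
  subgoal using gtensor_ex1 gtensor_gmod by blast
  subgoal by (auto intro: gtensor_map glin_gtensor_map)
  subgoal by (auto intro: gtensor_assoc glin_gtensor_assoc)
  subgoal using std_unit_std_gstr by blast
  subgoal by (auto intro: gtensor_left_unit glin_gtensor_left_unit gtensor_right_unit glin_gtensor_right_unit)
  subgoal by (auto intro: gtensor_swap glin_gtensor_swap)
  subgoal using gtensor_psi by blast
  done

end
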